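(* Let $K$ be a positive semiring and let $R$ and $S$ be $K$-relations over finite sets of attributes $X$ and $Y$. The following are equivalent: (a) $R$ and $S$ are consistent; (b) $R[X\cap Y]\equiv S[X\cap Y]$; (c) the ordinary relations $R'$ and $S'$ are consistent (i.e., $R'[X\cap Y]=S'[X\cap Y]$, where $P[W]=\{t[W]:t\in P\}$) and $R\Join S\equiv S\Join R$; (d) $R\equiv (R\Join S)[X]$ and $S\equiv (R\Join S)[Y]$.
   Context: A commutative semiring $(K,+,\cdot,0,1)$ with $0\neq 1$ is positive if $a+b=0$ implies $a=b=0$, and $ab=0$ implies $a=0$ or $b=0$. Each attribute $A$ has a domain $\mathrm{Dom}(A)$. For a finite set of attributes $X$, $\mathrm{Tup}(X)$ is the set of maps assigning to each $A\in X$ an element of $\mathrm{Dom}(A)$; for $Y\subseteq X$, $t[Y]$ is the restriction of $t$ to $Y$; $XY$ denotes $X\cup Y$. A $K$-relation over $X$ is a map $R:\mathrm{Tup}(X)\to K$ with finite support $R'=\{t: R(t)\neq 0\}$. For $Y\subseteq X$, the marginal $R[Y]$ is the $K$-relation over $Y$ with $R[Y](u)=\sum_{r\in R',\, r[Y]=u} R(r)$. For $a\in K$, $aR$ is $t\mapsto aR(t)$. $R\equiv S$ (same attribute set) means $aR=bS$ for some nonzero $a,b\in K$. $K$-relations $R$ over $X$ and $S$ over $Y$ are consistent if there is a $K$-relation $T$ over $XY$ with $R\equiv T[X]$ and $S\equiv T[Y]$. For a $K$-relation $T$ over $Y$, $Z\subseteq Y$ and $u\in\mathrm{Tup}(Z)$,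 set $c_T(u)=\prod_{v\in T[Z]',\, v\neq u}T[Z](v)$ (empty product equals $1$). The join of $R$ over $X$ and $S$ over $Y$ is the $K$-relation over $XY$ defined by $(R\Join S)(t)=R(t[X])\,S(t[Y])\,c_S(t[X\cap Y])$, with $Z=X\cap Y$. *)

theory Defs
  imports Main
begin

text \<open>Positive commutative semiring (0 \<noteq> 1 is part of comm_semiring_1).\<close>
definition positive_semiring :: "'k::comm_semiring_1 itself \<Rightarrow> bool" where
  "positive_semiring _ \<longleftrightarrow>
     (\<forall>a b::'k. a + b = 0 \<longrightarrow> a = 0 \<and> b = 0) \<and>
     (\<forall>a b::'k. a * b = 0 \<longrightarrow> a = 0 \<or> b = 0)"

definition Tup :: "('a \<Rightarrow> 'v set) \<Rightarrow> 'a set \<Rightarrow> ('a \<rightharpoonup> 'v) set" where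
  "Tup Dom X = {t. dom t = X \<and> (\<forall>A\<in>X. \<exists>v\<in>Dom A. t A = Some v)}"

definition supp :: "(('a \<rightharpoonup> 'v) \<Rightarrow> 'k::zero) \<Rightarrow> ('a \<rightharpoonup> 'v) set" where
  "supp R = {t. R t \<noteq> 0}"

definition krel :: "('a \<Rightarrow> 'v set) \<Rightarrow> 'a set \<Rightarrow> (('a \<rightharpoonup> 'v) \<Rightarrow> 'k::zero) \<Rightarrow> bool" where
  "krel Dom X R \<longleftrightarrow> supp R \<subseteq> Tup Dom X \<and> finite (supp R)"

definition marg :: "(('a \<rightharpoonup> 'v) \<Rightarrow> 'k::comm_monoid_add) \<Rightarrow> 'a set \<Rightarrow> ('a \<rightharpoonup> 'v) \<Rightarrow> 'k" where
  "marg R Y u = (\<Sum>r\<in>{r\<in>supp R. r |` Y = u}. R r)"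

definition kequiv :: "(('a \<rightharpoonup> 'v) \<Rightarrow> 'k::comm_semiring_1) \<Rightarrow> (('a \<rightharpoonup> 'v) \<Rightarrow> 'k) \<Rightarrow> bool" where
  "kequiv R S \<longleftrightarrow> (\<exists>a b. a \<noteq> 0 \<and> b \<noteq> 0 \<and> (\<lambda>t. a * R t) = (\<lambda>t. b * S t))"

definition kconsistent :: "('a \<Rightarrow> 'v set) \<Rightarrow> 'a set \<Rightarrow> (('a \<rightharpoonup> 'v) \<Rightarrow> 'k::comm_semiring_1)
    \<Rightarrow> 'a set \<Rightarrow> (('a \<rightharpoonup> 'v) \<Rightarrow> 'k) \<Rightarrow> bool" where
  "kconsistent Dom X R Y S \<longleftrightarrow>
     (\<exists>T. krel Dom (X \<union> Y) T \<and> kequiv R (marg T X) \<and> kequiv S (marg T Y))"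

definition cfac :: "(('a \<rightharpoonup> 'v) \<Rightarrow> 'k::comm_semiring_1) \<Rightarrow> 'a set \<Rightarrow> ('a \<rightharpoonup> 'v) \<Rightarrow> 'k" where
  "cfac T Z u = (\<Prod>v\<in>supp (marg T Z) - {u}. marg T Z v)"

definition kjoin :: "('a \<Rightarrow> 'v set) \<Rightarrow> 'a set \<Rightarrow> (('a \<rightharpoonup> 'v) \<Rightarrow> 'k::comm_semiring_1)
    \<Rightarrow> 'a set \<Rightarrow> (('a \<rightharpoonup> 'v) \<Rightarrow> 'k) \<Rightarrow> ('a \<rightharpoonup> 'v) \<Rightarrow> 'k" where
  "kjoin Dom X R Y S t =
     (if t \<in> Tup Dom (X \<union> Y)
      then R (t |` X) * S (t |` Y) * cfac S (X \<inter> Y) (t |` (X \<inter> Y))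
      else 0)"

definition rproj :: "('a \<rightharpoonup> 'v) set \<Rightarrow> 'a set \<Rightarrow> ('a \<rightharpoonup> 'v) set" where
  "rproj P W = (\<lambda>t. t |` W) ` P"

end

theory Submission
  imports Defs
begin

text \<open>
  Write Z = X \<inter> Y. Marginalizing the join onto X gives
  (R \<Join> S)[X](r) = R(r) c_S(r[Z]) S[Z](r[Z]), and c_S(u) S[Z](u) is the product P_S of
  all nonzero values of S[Z]. So as soon as R'[Z] \<subseteq> S'[Z] we get (R \<Join> S)[X] = P_S R, and
  symmetrically (S \<Join> R)[Y] = P_R S. Positivity makes \<equiv> an equivalence relation that
  preserves supports and commutes with marginals. If a R[Z] = b S[Z], then c_R and c_S
  differ by the constant factor (a/b)^(n-1) on the common support, whence
  R \<Join> S \<equiv> S \<Join> R; this gives (b) \<Rightarrow> (c) and (b) \<Rightarrow> (d), and (d) \<Rightarrow> (a) with witness R \<Join> S.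
  Marginalizing a witness of consistency, or both joins, onto Z gives (a) \<Rightarrow> (b) and
  (c) \<Rightarrow> (b), the latter as P_S R[Z] \<equiv> P_R S[Z].
\<close>

lemma positive_semiring_mult_neq_0:
  fixes a b :: "'k::comm_semiring_1"
  assumes "positive_semiring TYPE('k)" "a \<noteq> 0" "b \<noteq> 0"
  shows "a * b \<noteq> 0"
  using assms unfolding positive_semiring_def by blast

lemma positive_semiring_sum_eq_0_iff:
  fixes f :: "'b \<Rightarrow> 'k::comm_semiring_1"
  assumes "positive_semiring TYPE('k)" "finite A"
  shows "sum f A = 0 \<longleftrightarrow> (\<forall>x\<in>A. f x = 0)"
  using assms(2)
proof (induction A rule: finite_induct)
  case (insert y A)
  have "f y + sum f A = 0 \<longleftrightarrow> f y = 0 \<and> sum f A = 0"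
    using assms(1) add_0 unfolding positive_semiring_def by metis
  with insert show ?case by simp
qed simp

lemma positive_semiring_prod_neq_0:
  fixes f :: "'b \<Rightarrow> 'k::comm_semiring_1"
  assumes "positive_semiring TYPE('k)" "finite A" "\<And>x. x \<in> A \<Longrightarrow> f x \<noteq> 0"
  shows "prod f A \<noteq> 0"
  using assms(2,3)
  by (induction A rule: finite_induct) (simp_all add: positive_semiring_mult_neq_0[OF assms(1)])

lemma positive_semiring_power_neq_0:
  fixes a :: "'k::comm_semiring_1"
  assumes "positive_semiring TYPE('k)" "a \<noteq> 0"
  shows "a ^ n \<noteq> 0"
  using positive_semiring_prod_neq_0[OF assms(1), of "{..<n}" "\<lambda>_. a"] assms(2) by simp

lemma marg_eq_sum_superset:
  assumes "finite A" "supp H \<subseteq> A"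
  shows "marg H Y u = (\<Sum>r\<in>{r\<in>A. r |` Y = u}. H r)"
  unfolding marg_def
  by (rule sum.mono_neutral_left) (use assms in \<open>auto simp: supp_def\<close>)

lemma supp_marg_subset: "supp (marg (F::('a \<rightharpoonup> 'v) \<Rightarrow> 'k::comm_semiring_1) Z) \<subseteq> rproj (supp F) Z"
  unfolding supp_def marg_def rproj_def by (auto elim!: sum.not_neutral_contains_not_neutral)

lemma finite_supp_marg:
  fixes F :: "('a \<rightharpoonup> 'v) \<Rightarrow> 'k::comm_semiring_1"
  assumes "finite (supp F)"
  shows "finite (supp (marg F Z))"
  using supp_marg_subset[of F Z] assms unfolding rproj_def by (blast intro: finite_subset)

lemma supp_marg:
  fixes F :: "('a \<rightharpoonup> 'v) \<Rightarrow> 'k::comm_semiring_1"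
  assumes "positive_semiring TYPE('k)" "finite (supp F)"
  shows "supp (marg F Z) = rproj (supp F) Z"
proof
  show "rproj (supp F) Z \<subseteq> supp (marg F Z)"
  proof
    fix u assume "u \<in> rproj (supp F) Z"
    then obtain r where r: "r \<in> supp F" "r |` Z = u" unfolding rproj_def by blast
    have "finite {r\<in>supp F. r |` Z = u}" using assms(2) by simp
    then have "marg F Z u \<noteq> 0"
      unfolding marg_def using positive_semiring_sum_eq_0_iff[OF assms(1)] r
      by (auto simp: supp_def)
    then show "u \<in> supp (marg F Z)" by (simp add: supp_def)
  qed
qed (rule supp_marg_subset)

lemma marg_scale:
  fixes F :: "('a \<rightharpoonup> 'v) \<Rightarrow> 'k::comm_semiring_1"
  assumes "finite (supp F)"
  shows "marg (\<lambda>t. a * F t) Z = (\<lambda>u. a * marg F Z u)"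
proof
  fix u
  have "supp (\<lambda>t. a * F t) \<subseteq> supp F" by (auto simp: supp_def)
  then have "marg (\<lambda>t. a * F t) Z u = (\<Sum>r\<in>{r\<in>supp F. r |` Z = u}. a * F r)"
    by (rule marg_eq_sum_superset[OF assms])
  then show "marg (\<lambda>t. a * F t) Z u = a * marg F Z u"
    unfolding marg_def by (simp add: sum_distrib_left)
qed

lemma marg_marg:
  fixes F :: "('a \<rightharpoonup> 'v) \<Rightarrow> 'k::comm_semiring_1"
  assumes "finite (supp F)" "Z \<subseteq> X"
  shows "marg (marg F X) Z = marg F Z"
proof
  fix u
  let ?S = "{t\<in>supp F. t |` Z = u}"
  let ?T = "{v\<in>rproj (supp F) X. v |` Z = u}"
  have XZ: "X \<inter> Z = Z" using assms(2) by blast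
  have fin: "finite (rproj (supp F) X)" using assms(1) unfolding rproj_def by simp
  have "marg (marg F X) Z u = (\<Sum>v\<in>?T. marg F X v)"
    using marg_eq_sum_superset[OF fin supp_marg_subset] .
  also have "\<dots> = (\<Sum>v\<in>?T. \<Sum>t\<in>{t\<in>?S. t |` X = v}. F t)"
    unfolding marg_def by (intro sum.cong refl arg_cong[where f="sum F"]) (auto simp: XZ)
  also have "\<dots> = marg F Z u"
    unfolding marg_def
    by (rule sum.group) (use assms(1) fin in \<open>auto simp: rproj_def XZ\<close>)
  finally show "marg (marg F X) Z u = marg F Z u" .
qed

lemma kequivI:
  fixes a b :: "'k::comm_semiring_1"
  assumes "a \<noteq> 0" "b \<noteq> 0" "\<And>t. a * F t = b * G t"
  shows "kequiv F G"
  using assms unfolding kequiv_def by blast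

lemma kequivE:
  fixes F G :: "('a \<rightharpoonup> 'v) \<Rightarrow> 'k::comm_semiring_1"
  assumes "kequiv F G"
  obtains a b where "a \<noteq> 0" "b \<noteq> 0" "\<And>t. a * F t = b * G t"
  using assms unfolding kequiv_def by meson

lemma kequiv_sym: "kequiv F G \<Longrightarrow> kequiv G F"
  unfolding kequiv_def by metis

lemma kequiv_trans:
  fixes F G H :: "('a \<rightharpoonup> 'v) \<Rightarrow> 'k::comm_semiring_1"
  assumes "positive_semiring TYPE('k)" "kequiv F G" "kequiv G H"
  shows "kequiv F H"
proof -
  obtain a b where ab: "a \<noteq> 0" "b \<noteq> 0" "\<And>t. a * F t = b * G t" using assms(2) kequivE by metis
  obtain c d where cd: "c \<noteq> 0" "d \<noteq> 0" "\<And>t. c * G t = d * H t" using assms(3) kequivE by metis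
  show ?thesis
  proof (rule kequivI)
    show "c * a \<noteq> 0" "b * d \<noteq> 0"
      using ab cd positive_semiring_mult_neq_0[OF assms(1)] by auto
    fix t
    have "c * a * F t = c * (b * G t)" by (simp only: mult.assoc ab(3))
    also have "\<dots> = b * (d * H t)" by (simp only: mult.left_commute[of c] cd(3))
    finally show "c * a * F t = b * d * H t" by (simp add: mult.assoc)
  qed
qed

lemma kequiv_scale: "(c::'k::comm_semiring_1) \<noteq> 0 \<Longrightarrow> kequiv (\<lambda>t. c * F t) F"
  by (rule kequivI[of 1 c]) simp_all

lemma kequiv_supp:
  fixes F G :: "('a \<rightharpoonup> 'v) \<Rightarrow> 'k::comm_semiring_1"
  assumes "positive_semiring TYPE('k)" "kequiv F G"
  shows "supp F = supp G"
proof -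
  obtain a b where ab: "a \<noteq> 0" "b \<noteq> 0" "\<And>t. a * F t = b * G t" using assms(2) kequivE by metis
  have "F t \<noteq> 0 \<longleftrightarrow> G t \<noteq> 0" for t
    using ab positive_semiring_mult_neq_0[OF assms(1)] by (metis mult_zero_right)
  then show ?thesis unfolding supp_def by blast
qed

lemma kequiv_marg:
  fixes F G :: "('a \<rightharpoonup> 'v) \<Rightarrow> 'k::comm_semiring_1"
  assumes "finite (supp F)" "finite (supp G)" "kequiv F G"
  shows "kequiv (marg F Z) (marg G Z)"
proof -
  obtain a b where ab: "a \<noteq> 0" "b \<noteq> 0" "(\<lambda>t. a * F t) = (\<lambda>t. b * G t)"
    using assms(3) unfolding kequiv_def by blast
  have "(\<lambda>u. a * marg F Z u) = (\<lambda>u. b * marg G Z u)"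
    using arg_cong[OF ab(3), of "\<lambda>H. marg H Z"] by (simp add: marg_scale assms(1,2))
  with ab(1,2) show ?thesis unfolding kequiv_def by blast
qed

lemma Tup_dom: "t \<in> Tup Dom W \<Longrightarrow> dom t = W"
  unfolding Tup_def by simp

lemma Tup_restrict: "t \<in> Tup Dom W \<Longrightarrow> V \<subseteq> W \<Longrightarrow> t |` V \<in> Tup Dom V"
  unfolding Tup_def by auto

lemma map_add_Tup: "r \<in> Tup Dom X \<Longrightarrow> s \<in> Tup Dom Y \<Longrightarrow> r ++ s \<in> Tup Dom (X \<union> Y)"
  unfolding Tup_def by (auto simp: map_add_def split: option.split) (metis domI option.inject)+

lemma map_add_restrict_self: "dom t \<subseteq> X \<union> Y \<Longrightarrow> t |` X ++ t |` Y = t"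
  by (rule ext) (auto simp: map_add_def restrict_map_def split: option.split)

lemma restrict_map_add_right: "dom s = Y \<Longrightarrow> (r ++ s) |` Y = s"
  by (rule ext) (auto simp: map_add_def restrict_map_def split: option.split)

lemma restrict_map_add_left:
  assumes "dom r = X" "dom s = Y" "s |` (X \<inter> Y) = r |` (X \<inter> Y)"
  shows "(r ++ s) |` X = r"
proof (rule ext)
  fix x
  have "s x = r x" if "x \<in> X" "s x \<noteq> None"
  proof -
    have "x \<in> X \<inter> Y" using that assms(2) by auto
    then show ?thesis using fun_cong[OF assms(3), of x] by simp
  qed
  then show "((r ++ s) |` X) x = r x"
    using assms(1) by (cases "x \<in> X"; cases "s x") (auto simp: map_add_def)
qed

lemma krel_kjoin:
  assumes "krel Dom X R" "krel Dom Y S"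
  shows "krel Dom (X \<union> Y) (kjoin Dom X R Y S)"
proof -
  have "supp (kjoin Dom X R Y S) \<subseteq> (\<lambda>(r, s). r ++ s) ` (supp R \<times> supp S)"
  proof
    fix t assume "t \<in> supp (kjoin Dom X R Y S)"
    then have t: "t \<in> Tup Dom (X \<union> Y)" "t |` X \<in> supp R" "t |` Y \<in> supp S"
      unfolding supp_def kjoin_def by (auto split: if_splits)
    have "t = t |` X ++ t |` Y" using Tup_dom[OF t(1)] map_add_restrict_self[of t X Y] by simp
    with t(2,3) show "t \<in> (\<lambda>(r, s). r ++ s) ` (supp R \<times> supp S)" by force
  qed
  moreover have "supp (kjoin Dom X R Y S) \<subseteq> Tup Dom (X \<union> Y)"
    unfolding supp_def kjoin_def by auto
  ultimately show ?thesis
    using assms unfolding krel_def by (auto intro: finite_subset)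
qed

lemma marg_kjoin:
  assumes "krel Dom X R" "krel Dom Y S"
  shows "marg (kjoin Dom X R Y S) X r
           = R r * cfac S (X \<inter> Y) (r |` (X \<inter> Y)) * marg S (X \<inter> Y) (r |` (X \<inter> Y))"
proof (cases "r \<in> Tup Dom X")
  case False
  then have "R r = 0" using assms(1) unfolding krel_def supp_def by blast
  moreover have "{t \<in> supp (kjoin Dom X R Y S). t |` X = r} = {}"
    using False Tup_restrict[of _ Dom "X \<union> Y" X] by (auto simp: supp_def kjoin_def)
  then have "marg (kjoin Dom X R Y S) X r = 0" unfolding marg_def by (simp only: sum.empty)
  ultimately show ?thesis by simp
next
  case True
  let ?J = "kjoin Dom X R Y S" and ?Z = "X \<inter> Y"
  let ?c = "R r * cfac S ?Z (r |` ?Z)"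
  let ?B = "{s \<in> supp S. s |` ?Z = r |` ?Z}"
  have SY: "supp S \<subseteq> Tup Dom Y" and fin: "finite ?B"
    using assms(2) unfolding krel_def by auto
  have restr: "(r ++ s) |` X = r" "(r ++ s) |` Y = s" if "s \<in> ?B" for s
    using that SY Tup_dom[OF True] Tup_dom[of s Dom Y]
    by (auto intro: restrict_map_add_left restrict_map_add_right)
  have inj: "inj_on (\<lambda>s. r ++ s) ?B"
    by (rule inj_on_inverseI[of _ "\<lambda>t. t |` Y"]) (use restr in blast)
  have covers: "{t \<in> supp ?J. t |` X = r} \<subseteq> (\<lambda>s. r ++ s) ` ?B"
  proof
    fix t assume "t \<in> {t \<in> supp ?J. t |` X = r}"
    then have t: "t \<in> Tup Dom (X \<union> Y)" "t |` X = r" "t |` Y \<in> supp S"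
      unfolding supp_def kjoin_def by (auto split: if_splits)
    have "t = r ++ t |` Y" using Tup_dom[OF t(1)] map_add_restrict_self[of t X Y] t(2) by simp
    moreover have "t |` Y |` ?Z = r |` ?Z" using t(2) by (auto simp: Int_ac)
    ultimately show "t \<in> (\<lambda>s. r ++ s) ` ?B" using t(3) by blast
  qed
  have join_at: "?J (r ++ s) = ?c * S s" if "s \<in> ?B" for s
  proof -
    have "r ++ s \<in> Tup Dom (X \<union> Y)" using that SY map_add_Tup[OF True] by blast
    moreover have "(r ++ s) |` ?Z = r |` ?Z"
      by (metis restr(1)[OF that] restrict_restrict Int_left_absorb)
    ultimately show ?thesis by (simp add: kjoin_def restr[OF that] ac_simps)
  qed
  have "marg ?J X r = sum ?J ((\<lambda>s. r ++ s) ` ?B)"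
    unfolding marg_def
    by (rule sum.mono_neutral_left) (use fin covers restr in \<open>auto simp: supp_def\<close>)
  also have "\<dots> = (\<Sum>s\<in>?B. ?c * S s)"
    by (simp add: sum.reindex[OF inj] join_at)
  also have "\<dots> = ?c * marg S ?Z (r |` ?Z)"
    by (simp add: marg_def sum_distrib_left)
  finally show ?thesis .
qed

definition prod_marg :: "(('a \<rightharpoonup> 'v) \<Rightarrow> 'k::comm_semiring_1) \<Rightarrow> 'a set \<Rightarrow> 'k" where
  "prod_marg T Z = (\<Prod>v\<in>supp (marg T Z). marg T Z v)"

lemma cfac_mult_marg:
  assumes "finite (supp T)" "u \<in> supp (marg T Z)"
  shows "cfac T Z u * marg T Z u = prod_marg T Z"
  unfolding cfac_def prod_marg_def
  using prod.remove[OF finite_supp_marg[OF assms(1)] assms(2), of "marg T Z"]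
  by (simp add: mult.commute)

lemma prod_marg_neq_0:
  fixes T :: "('a \<rightharpoonup> 'v) \<Rightarrow> 'k::comm_semiring_1"
  assumes "positive_semiring TYPE('k)" "finite (supp T)"
  shows "prod_marg T Z \<noteq> 0"
  unfolding prod_marg_def
  by (rule positive_semiring_prod_neq_0[OF assms(1) finite_supp_marg[OF assms(2)]])
     (simp add: supp_def)

lemma marg_kjoin_eq_scale:
  fixes R S :: "('a \<rightharpoonup> 'v) \<Rightarrow> 'k::comm_semiring_1"
  assumes "positive_semiring TYPE('k)" "krel Dom X R" "krel Dom Y S"
    and "rproj (supp R) (X \<inter> Y) \<subseteq> rproj (supp S) (X \<inter> Y)"
  shows "marg (kjoin Dom X R Y S) X = (\<lambda>r. prod_marg S (X \<inter> Y) * R r)"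
proof
  fix r :: "'a \<rightharpoonup> 'v"
  let ?u = "r |` (X \<inter> Y)"
  have fin: "finite (supp S)" using assms(3) unfolding krel_def by simp
  show "marg (kjoin Dom X R Y S) X r = prod_marg S (X \<inter> Y) * R r"
  proof (cases "R r = 0")
    case False
    then have "?u \<in> supp (marg S (X \<inter> Y))"
      using assms(4) supp_marg[OF assms(1) fin] unfolding rproj_def supp_def by blast
    then show ?thesis
      using marg_kjoin[OF assms(2,3)] cfac_mult_marg[OF fin] by (simp add: ac_simps)
  qed (simp add: marg_kjoin[OF assms(2,3)])
qed

lemma kequiv_marg_imp_cfac_scale:
  fixes R S :: "('a \<rightharpoonup> 'v) \<Rightarrow> 'k::comm_semiring_1"
  assumes "positive_semiring TYPE('k)" "finite (supp R)" "finite (supp S)"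
    and "kequiv (marg R Z) (marg S Z)"
  obtains a b where "a \<noteq> 0" "b \<noteq> 0"
    "\<And>u. u \<in> supp (marg R Z) \<Longrightarrow> a * cfac R Z u = b * cfac S Z u"
proof -
  let ?W = "supp (marg R Z)"
  let ?n = "card ?W - 1"
  obtain a b where ab: "a \<noteq> 0" "b \<noteq> 0" "\<And>t. a * marg R Z t = b * marg S Z t"
    using assms(4) kequivE by metis
  have W: "supp (marg S Z) = ?W" using kequiv_supp[OF assms(1,4)] by simp
  have finW: "finite ?W" by (rule finite_supp_marg[OF assms(2)])
  have "a ^ ?n * cfac R Z u = b ^ ?n * cfac S Z u" if "u \<in> ?W" for u
  proof -
    have n: "card (?W - {u}) = ?n" using that finW by simp
    have "a ^ ?n * cfac R Z u = (\<Prod>v\<in>?W - {u}. a * marg R Z v)"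
      unfolding cfac_def n[symmetric] by (simp add: prod.distrib)
    also have "\<dots> = (\<Prod>v\<in>?W - {u}. b * marg S Z v)" by (simp only: ab(3))
    also have "\<dots> = b ^ ?n * cfac S Z u"
      unfolding cfac_def W n[symmetric] by (simp add: prod.distrib)
    finally show ?thesis .
  qed
  then show thesis
    using that positive_semiring_power_neq_0[OF assms(1)] ab(1,2) by blast
qed

lemma kconsistent_imp_kequiv_marg:
  fixes R S :: "('a \<rightharpoonup> 'v) \<Rightarrow> 'k::comm_semiring_1"
  assumes "positive_semiring TYPE('k)" "finite (supp R)" "finite (supp S)"
    and "kconsistent Dom X R Y S"
  shows "kequiv (marg R (X \<inter> Y)) (marg S (X \<inter> Y))"
proof -
  obtain T where T: "krel Dom (X \<union> Y) T" "kequiv R (marg T X)" "kequiv S (marg T Y)"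
    using assms(4) unfolding kconsistent_def by blast
  have fin: "finite (supp T)" using T(1) unfolding krel_def by simp
  have "kequiv (marg R (X \<inter> Y)) (marg T (X \<inter> Y))"
    using kequiv_marg[OF assms(2) finite_supp_marg[OF fin] T(2), of "X \<inter> Y"] marg_marg[OF fin, of "X \<inter> Y" X] by simp
  moreover have "kequiv (marg S (X \<inter> Y)) (marg T (X \<inter> Y))"
    using kequiv_marg[OF assms(3) finite_supp_marg[OF fin] T(3), of "X \<inter> Y"] marg_marg[OF fin, of "X \<inter> Y" Y] by simp
  ultimately show ?thesis using kequiv_trans[OF assms(1)] kequiv_sym by blast
qed

lemma rproj_supp_eq_if_kequiv_marg:
  fixes R S :: "('a \<rightharpoonup> 'v) \<Rightarrow> 'k::comm_semiring_1"
  assumes "positive_semiring TYPE('k)" "finite (supp R)" "finite (supp S)"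
    and "kequiv (marg R Z) (marg S Z)"
  shows "rproj (supp R) Z = rproj (supp S) Z"
  using kequiv_supp[OF assms(1,4)] supp_marg[OF assms(1,2)] supp_marg[OF assms(1,3)] by simp

lemma kequiv_marg_imp_kequiv_kjoin:
  fixes R S :: "('a \<rightharpoonup> 'v) \<Rightarrow> 'k::comm_semiring_1"
  assumes "positive_semiring TYPE('k)" "krel Dom X R" "krel Dom Y S"
    and "kequiv (marg R (X \<inter> Y)) (marg S (X \<inter> Y))"
  shows "kequiv (kjoin Dom X R Y S) (kjoin Dom Y S X R)"
proof -
  let ?Z = "X \<inter> Y"
  have fin: "finite (supp R)" "finite (supp S)" using assms(2,3) unfolding krel_def by auto
  obtain a b where ab: "a \<noteq> 0" "b \<noteq> 0"
    "\<And>u. u \<in> supp (marg R ?Z) \<Longrightarrow> a * cfac R ?Z u = b * cfac S ?Z u"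
    using kequiv_marg_imp_cfac_scale[OF assms(1) fin assms(4)] by blast
  show ?thesis
  proof (rule kequivI[OF ab(2,1)])
    fix t :: "'a \<rightharpoonup> 'v"
    show "b * kjoin Dom X R Y S t = a * kjoin Dom Y S X R t"
    proof (cases "t \<in> Tup Dom (X \<union> Y) \<and> R (t |` X) \<noteq> 0")
      case True
      then have "t |` X \<in> supp R" by (simp add: supp_def)
      then have "t |` X |` ?Z \<in> supp (marg R ?Z)"
        using supp_marg[OF assms(1) fin(1)] unfolding rproj_def by blast
      then have "t |` ?Z \<in> supp (marg R ?Z)" by simp
      then have c: "b * cfac S ?Z (t |` ?Z) = a * cfac R ?Z (t |` ?Z)" by (simp add: ab(3))
      have "kjoin Dom X R Y S t = R (t |` X) * S (t |` Y) * cfac S ?Z (t |` ?Z)"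
        using True by (simp add: kjoin_def)
      moreover have "kjoin Dom Y S X R t = R (t |` X) * S (t |` Y) * cfac R ?Z (t |` ?Z)"
        using True by (simp add: kjoin_def Un_commute Int_commute mult.commute[of "S (t |` Y)"])
      ultimately show ?thesis
        by (simp only: mult.assoc mult.left_commute[of b] mult.left_commute[of a] c)
    qed (auto simp: kjoin_def Un_commute)
  qed
qed

lemma kequiv_kjoin_imp_kequiv_marg:
  fixes R S :: "('a \<rightharpoonup> 'v) \<Rightarrow> 'k::comm_semiring_1"
  assumes "positive_semiring TYPE('k)" "krel Dom X R" "krel Dom Y S"
    and "rproj (supp R) (X \<inter> Y) = rproj (supp S) (X \<inter> Y)"
    and "kequiv (kjoin Dom X R Y S) (kjoin Dom Y S X R)"
  shows "kequiv (marg R (X \<inter> Y)) (marg S (X \<inter> Y))"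
proof -
  let ?Z = "X \<inter> Y" and ?J = "kjoin Dom X R Y S" and ?J' = "kjoin Dom Y S X R"
  have fin: "finite (supp R)" "finite (supp S)" using assms(2,3) unfolding krel_def by auto
  have finJ: "finite (supp ?J)" "finite (supp ?J')"
    using krel_kjoin[OF assms(2,3)] krel_kjoin[OF assms(3,2)] unfolding krel_def by auto
  have "marg ?J X = (\<lambda>r. prod_marg S ?Z * R r)"
    using marg_kjoin_eq_scale[OF assms(1-3)] assms(4) by simp
  then have J: "marg ?J ?Z = (\<lambda>u. prod_marg S ?Z * marg R ?Z u)"
    using marg_marg[OF finJ(1), of ?Z X] marg_scale[OF fin(1)] by simp
  have "marg ?J' Y = (\<lambda>s. prod_marg R ?Z * S s)"
    using marg_kjoin_eq_scale[OF assms(1,3,2)] assms(4) by (simp add: Int_commute)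
  then have J': "marg ?J' ?Z = (\<lambda>u. prod_marg R ?Z * marg S ?Z u)"
    using marg_marg[OF finJ(2), of ?Z Y] marg_scale[OF fin(2)] by simp
  have "kequiv (\<lambda>u. prod_marg S ?Z * marg R ?Z u) (\<lambda>u. prod_marg R ?Z * marg S ?Z u)"
    using kequiv_marg[OF finJ assms(5), of ?Z] unfolding J J' .
  then show ?thesis
    using kequiv_scale[OF prod_marg_neq_0[OF assms(1) fin(1)]]
      kequiv_scale[OF prod_marg_neq_0[OF assms(1) fin(2)]]
      kequiv_trans[OF assms(1)] kequiv_sym by metis
qed

lemma kequiv_marg_imp_kequiv_marg_kjoin:
  fixes R S :: "('a \<rightharpoonup> 'v) \<Rightarrow> 'k::comm_semiring_1"
  assumes "positive_semiring TYPE('k)" "krel Dom X R" "krel Dom Y S"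
    and "kequiv (marg R (X \<inter> Y)) (marg S (X \<inter> Y))"
  shows "kequiv R (marg (kjoin Dom X R Y S) X) \<and> kequiv S (marg (kjoin Dom X R Y S) Y)"
proof
  let ?Z = "X \<inter> Y" and ?J = "kjoin Dom X R Y S" and ?J' = "kjoin Dom Y S X R"
  have fin: "finite (supp R)" "finite (supp S)" using assms(2,3) unfolding krel_def by auto
  have finJ: "finite (supp ?J)" "finite (supp ?J')"
    using krel_kjoin[OF assms(2,3)] krel_kjoin[OF assms(3,2)] unfolding krel_def by auto
  have supp_eq: "rproj (supp R) ?Z = rproj (supp S) ?Z"
    by (rule rproj_supp_eq_if_kequiv_marg[OF assms(1) fin assms(4)])
  have "marg ?J X = (\<lambda>r. prod_marg S ?Z * R r)"
    using marg_kjoin_eq_scale[OF assms(1-3)] supp_eq by simp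
  then show "kequiv R (marg ?J X)"
    using kequiv_sym[OF kequiv_scale[OF prod_marg_neq_0[OF assms(1) fin(2)]]] by simp
  have "marg ?J' Y = (\<lambda>s. prod_marg R ?Z * S s)"
    using marg_kjoin_eq_scale[OF assms(1,3,2)] supp_eq by (simp add: Int_commute)
  moreover have "kequiv (marg ?J Y) (marg ?J' Y)"
    by (rule kequiv_marg[OF finJ kequiv_marg_imp_kequiv_kjoin[OF assms]])
  ultimately show "kequiv S (marg ?J Y)"
    using kequiv_scale[OF prod_marg_neq_0[OF assms(1) fin(1)]]
      kequiv_trans[OF assms(1)] kequiv_sym by metis
qed

theorem lemma7:
  fixes Dom :: "'a \<Rightarrow> 'v set"
    and X Y :: "'a set"
    and R S :: "('a \<rightharpoonup> 'v) \<Rightarrow> 'k::comm_semiring_1"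
  assumes "positive_semiring TYPE('k)"
    and "finite X" and "finite Y"
    and "krel Dom X R" and "krel Dom Y S"
  shows "(kconsistent Dom X R Y S
            \<longleftrightarrow> kequiv (marg R (X \<inter> Y)) (marg S (X \<inter> Y)))
       \<and> (kconsistent Dom X R Y S
            \<longleftrightarrow> (rproj (supp R) (X \<inter> Y) = rproj (supp S) (X \<inter> Y)
                 \<and> kequiv (kjoin Dom X R Y S) (kjoin Dom Y S X R)))
       \<and> (kconsistent Dom X R Y S
            \<longleftrightarrow> (kequiv R (marg (kjoin Dom X R Y S) X)
                 \<and> kequiv S (marg (kjoin Dom X R Y S) Y)))"
proof -
  note pos = assms(1) and rels = assms(4,5)
  have fin: "finite (supp R)" "finite (supp S)" using rels unfolding krel_def by auto
  let ?b = "kequiv (marg R (X \<inter> Y)) (marg S (X \<inter> Y))"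
  have "kconsistent Dom X R Y S \<Longrightarrow> ?b"
    by (rule kconsistent_imp_kequiv_marg[OF pos fin])
  moreover have "?b \<Longrightarrow> rproj (supp R) (X \<inter> Y) = rproj (supp S) (X \<inter> Y)"
    by (rule rproj_supp_eq_if_kequiv_marg[OF pos fin])
  moreover have "?b \<Longrightarrow> kequiv (kjoin Dom X R Y S) (kjoin Dom Y S X R)"
    by (rule kequiv_marg_imp_kequiv_kjoin[OF pos rels])
  moreover have "rproj (supp R) (X \<inter> Y) = rproj (supp S) (X \<inter> Y)
      \<Longrightarrow> kequiv (kjoin Dom X R Y S) (kjoin Dom Y S X R) \<Longrightarrow> ?b"
    by (rule kequiv_kjoin_imp_kequiv_marg[OF pos rels])
  moreover have "?b \<Longrightarrow> kequiv R (marg (kjoin Dom X R Y S) X)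
      \<and> kequiv S (marg (kjoin Dom X R Y S) Y)"
    by (rule kequiv_marg_imp_kequiv_marg_kjoin[OF pos rels])
  moreover have "kequiv R (marg (kjoin Dom X R Y S) X) \<Longrightarrow> kequiv S (marg (kjoin Dom X R Y S) Y)
      \<Longrightarrow> kconsistent Dom X R Y S"
    using krel_kjoin[OF rels] unfolding kconsistent_def by blast
  ultimately show ?thesis by blast
qed

end
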